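(* Let $(M,P,g)$ be a 4-dimensional Riemannian almost product manifold with $\operatorname{tr}P=0$ and let $L$ be any Riemannian $P$-tensor on $M$. Then at every point: (1) $\rho(L)=\frac14\{\tau(L)\,g+\tau^*(L)\,\widetilde g\}$ (i.e. $M$ is almost Einstein with respect to $L$); (2) for every pair of orthonormal vectors $x,y$ spanning a totally real 2-plane (i.e. $g(x,Px)=g(x,Py)=g(y,Px)=g(y,Py)=0$) one has $L(x,y,y,x)=\tau(L)/8$, so the totally real sectional curvature with respect to $L$ is pointwise constant; (3) for every unit vector $x$ with $g(x,Px)=0$ (so that $\mathrm{span}\{x,Px\}$ is an invariant 2-plane) one has $L(x,Px,Px,x)=0$.
   Context: A Riemannian almost product manifold $(M,P,g)$: $M$ smooth, $P$ a $(1,1)$-tensor field with $P^2=\mathrm{id}$, $g$ Riemannian with $g(Px,Py)=g(x,y)$. A curvature-like tensor is a $(0,4)$-tensor $L$ with $L(x,y,z,w)=-L(y,x,z,w)=-L(x,y,w,z)$ and $L(x,y,z,w)+L(y,z,x,w)+L(z,x,y,w)=0$; it is a Riemannian $P$-tensor if moreover $L(x,y,Pz,Pw)=L(x,y,z,w)$. $\widetilde g(x,y)=g(x,Py)$. With $g^{ij}$ the inverse matrix of $g$ in a basis $\{e_i\}$: $\rho(L)(y,z)=\sum g^{ij}L(e_i,y,z,e_j)$, $\tau(L)=\sum g^{ij}\rho(L)(e_i,e_j)$, $\rho^*(L)(y,z)=\sum g^{ij}L(e_i,y,z,Pe_j)$, $\tau^*(L)=\sum g^{ij}\rho^*(L)(e_i,e_j)$.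 *)

theory Defs
  imports "HOL-Analysis.Analysis"
begin

text \<open>Pointwise (tangent-space) setting: the tangent space at a point is modelled by a
  finite-dimensional real inner product space 'a (euclidean_space), with g = inner.
  Basis is a g-orthonormal basis, so g^{ij} is the Kronecker delta.\<close>

definition multilinear4 :: "('a::real_vector \<Rightarrow> 'a \<Rightarrow> 'a \<Rightarrow> 'a \<Rightarrow> real) \<Rightarrow> bool" where
  "multilinear4 L \<longleftrightarrow>
     (\<forall>y z w. linear (\<lambda>x. L x y z w)) \<and> (\<forall>x z w. linear (\<lambda>y. L x y z w)) \<and>
     (\<forall>x y w. linear (\<lambda>z. L x y z w)) \<and> (\<forall>x y z. linear (\<lambda>w. L x y z w))"

definition curvature_like :: "('a::real_vector \<Rightarrow> 'a \<Rightarrow> 'a \<Rightarrow> 'a \<Rightarrow> real) \<Rightarrow> bool" where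
  "curvature_like L \<longleftrightarrow> multilinear4 L \<and>
     (\<forall>x y z w. L x y z w = - L y x z w) \<and>
     (\<forall>x y z w. L x y z w = - L x y w z) \<and>
     (\<forall>x y z w. L x y z w + L y z x w + L z x y w = 0)"

definition riemannian_P_tensor :: "('a::real_vector \<Rightarrow> 'a) \<Rightarrow> ('a \<Rightarrow> 'a \<Rightarrow> 'a \<Rightarrow> 'a \<Rightarrow> real) \<Rightarrow> bool" where
  "riemannian_P_tensor P L \<longleftrightarrow> curvature_like L \<and> (\<forall>x y z w. L x y (P z) (P w) = L x y z w)"

definition almost_product_structure :: "('a::real_inner \<Rightarrow> 'a) \<Rightarrow> bool" where
  "almost_product_structure P \<longleftrightarrow> linear P \<and> (\<forall>x. P (P x) = x) \<and>
     (\<forall>x y. inner (P x) (P y) = inner x y)"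

definition ptrace :: "('a::euclidean_space \<Rightarrow> 'a) \<Rightarrow> real" where
  "ptrace P = (\<Sum>b\<in>Basis. inner (P b) b)"

definition gtilde :: "('a::real_inner \<Rightarrow> 'a) \<Rightarrow> 'a \<Rightarrow> 'a \<Rightarrow> real" where
  "gtilde P x y = inner x (P y)"

definition ricci :: "('a::euclidean_space \<Rightarrow> 'a \<Rightarrow> 'a \<Rightarrow> 'a \<Rightarrow> real) \<Rightarrow> 'a \<Rightarrow> 'a \<Rightarrow> real" where
  "ricci L y z = (\<Sum>e\<in>Basis. L e y z e)"

definition scal :: "('a::euclidean_space \<Rightarrow> 'a \<Rightarrow> 'a \<Rightarrow> 'a \<Rightarrow> real) \<Rightarrow> real" where
  "scal L = (\<Sum>e\<in>Basis. ricci L e e)"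

definition ricci_star :: "('a::euclidean_space \<Rightarrow> 'a) \<Rightarrow> ('a \<Rightarrow> 'a \<Rightarrow> 'a \<Rightarrow> 'a \<Rightarrow> real) \<Rightarrow> 'a \<Rightarrow> 'a \<Rightarrow> real" where
  "ricci_star P L y z = (\<Sum>e\<in>Basis. L e y z (P e))"

definition scal_star :: "('a::euclidean_space \<Rightarrow> 'a) \<Rightarrow> ('a \<Rightarrow> 'a \<Rightarrow> 'a \<Rightarrow> 'a \<Rightarrow> real) \<Rightarrow> real" where
  "scal_star P L = (\<Sum>e\<in>Basis. ricci_star P L e e)"

end

theory Submission
  imports Defs
begin

(* The involutive isometry P splits the tangent space orthogonally into its
   eigenspaces V+ = {Px = x} and V- = {Px = -x}, and tr P = dim V+ - dim V-.  In dimension 4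
   with tr P = 0 both eigenspaces are planes, so there is an orthonormal frame u1,u2 (spanning
   V+) and u3,u4 (spanning V-).  A Riemannian P-tensor vanishes as soon as one of its pairs
   mixes the two eigenspaces; hence L is the sum of its restrictions to V+ and to V-, and a
   curvature-like tensor on a plane is a multiple of (area form) x (area form).  Thus
      L = k+ . A+ (x) A+ + k- . A- (x) A-,     k+ = L(u1,u2,u2,u1), k- = L(u3,u4,u4,u3),
   from which rho, tau, rho*, tau* are computed explicitly in the frame
   (tau = 2(k+ + k-), tau* = 2(k+ - k-)), and the three claims become short computations. *)

section \<open>Curvature-like tensors\<close>

lemma multilinear4_simps:
  assumes "multilinear4 L"
  shows "L (x+x') y z w = L x y z w + L x' y z w"
    "L x (y+y') z w = L x y z w + L x y' z w"
    "L x y (z+z') w = L x y z w + L x y z' w"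
    "L x y z (w+w') = L x y z w + L x y z w'"
    "L (c *\<^sub>R x) y z w = c * L x y z w"
    "L x (c *\<^sub>R y) z w = c * L x y z w"
    "L x y (c *\<^sub>R z) w = c * L x y z w"
    "L x y z (c *\<^sub>R w) = c * L x y z w"
    "L (- x) y z w = - L x y z w"
    "L x (- y) z w = - L x y z w"
    "L x y (- z) w = - L x y z w"
    "L x y z (- w) = - L x y z w"
    "L 0 y z w = 0" "L x 0 z w = 0" "L x y 0 w = 0" "L x y z 0 = 0"
proof -
  have slot: "linear (\<lambda>x. L x y z w)" "linear (\<lambda>y. L x y z w)"
    "linear (\<lambda>z. L x y z w)" "linear (\<lambda>w. L x y z w)" for x y z w
    using assms unfolding multilinear4_def by blast+
  show "L (x+x') y z w = L x y z w + L x' y z w"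
    "L x (y+y') z w = L x y z w + L x y' z w"
    "L x y (z+z') w = L x y z w + L x y z' w"
    "L x y z (w+w') = L x y z w + L x y z w'"
    "L (c *\<^sub>R x) y z w = c * L x y z w"
    "L x (c *\<^sub>R y) z w = c * L x y z w"
    "L x y (c *\<^sub>R z) w = c * L x y z w"
    "L x y z (c *\<^sub>R w) = c * L x y z w"
    "L (- x) y z w = - L x y z w"
    "L x (- y) z w = - L x y z w"
    "L x y (- z) w = - L x y z w"
    "L x y z (- w) = - L x y z w"
    "L 0 y z w = 0" "L x 0 z w = 0" "L x y 0 w = 0" "L x y z 0 = 0"
    using slot[THEN linear_add] slot[THEN linear_scale] slot[THEN linear_neg] slot[THEN linear_0]
    by simp_all
qed

lemma curvature_like_multilinear: "curvature_like L \<Longrightarrow> multilinear4 L"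
  unfolding curvature_like_def by blast

text \<open>The classical pair symmetry of a curvature-like tensor: add the first Bianchi identity
  for the four cyclic rotations of (x,y,z,w) and normalise with the two antisymmetries.\<close>

lemma curvature_like_pair_symmetry:
  assumes "curvature_like L"
  shows "L x y z w = L z w x y"
proof -
  have anti1: "\<And>x y z w. L x y z w = - L y x z w"
    and anti2: "\<And>x y z w. L x y z w = - L x y w z"
    and bianchi: "\<And>x y z w. L x y z w + L y z x w + L z x y w = 0"
    using assms unfolding curvature_like_def by blast+
  have "L x y z w + L y z x w + L z x y w = 0" "L y z w x + L z w y x + L w y z x = 0"
       "L z w x y + L w x z y + L x z w y = 0" "L w x y z + L x y w z + L y w x z = 0"
    using bianchi by blast+
  then show ?thesis using anti1 anti2 by smt
qed

lemma curvature_like_on_plane: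
  assumes "curvature_like L"
  shows "L (x1 *\<^sub>R u1 + x2 *\<^sub>R u2) (y1 *\<^sub>R u1 + y2 *\<^sub>R u2) (z1 *\<^sub>R u1 + z2 *\<^sub>R u2)
           (w1 *\<^sub>R u1 + w2 *\<^sub>R u2)
     = (x1*y2 - x2*y1) * (w1*z2 - w2*z1) * L u1 u2 u2 u1"
proof -
  have anti1: "\<And>x y z w. L x y z w = - L y x z w"
    and anti2: "\<And>x y z w. L x y z w = - L x y w z"
    using assms unfolding curvature_like_def by blast+
  have diag: "L x x z w = 0" "L x y z z = 0" for x y z w
    using anti1[of x x z w] anti2[of x y z z] by simp_all
  have swap: "L u2 u1 z w = - L u1 u2 z w" "L x y u1 u2 = - L x y u2 u1" for x y z w
    using anti1 anti2 by blast+
  show ?thesis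
    by (simp add: multilinear4_simps[OF curvature_like_multilinear[OF assms]] diag swap
        algebra_simps)
qed

section \<open>Almost product structures and Riemannian P-tensors\<close>

lemma almost_product_linear:
  assumes "almost_product_structure P"
  shows "P (x + y) = P x + P y" "P (c *\<^sub>R x) = c *\<^sub>R P x" "P (- x) = - P x"
    "P (x - y) = P x - P y" "P 0 = 0"
  using assms unfolding almost_product_structure_def
  by (simp_all add: linear_add linear_scale linear_neg linear_diff linear_0)

lemma almost_product_involutive: "almost_product_structure P \<Longrightarrow> P (P x) = x"
  unfolding almost_product_structure_def by blast

lemma almost_product_selfadjoint:
  assumes "almost_product_structure P"
  shows "inner (P x) y = inner x (P y)"
  using assms unfolding almost_product_structure_def by (metis (no_types))

text \<open>A Riemannian P-tensor vanishes whenever one of its pairs consists of a (+1)- and a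
  (-1)-eigenvector of P, since swapping the last pair by P changes its sign.\<close>

lemma P_tensor_mixed_pair:
  assumes R: "riemannian_P_tensor P L" and a: "P a = a" and b: "P b = - b"
  shows "L z w a b = 0" "L z w b a = 0" "L a b z w = 0" "L b a z w = 0"
proof -
  have C: "curvature_like L" and inv: "\<And>x y z w. L x y (P z) (P w) = L x y z w"
    using R unfolding riemannian_P_tensor_def by blast+
  note ml = multilinear4_simps[OF curvature_like_multilinear[OF C]]
  have "L z w a b = L z w (P a) (P b)" using inv by simp
  also have "\<dots> = - L z w a b" using a b ml by simp
  finally show ab: "L z w a b = 0" by simp
  have "L z w b a = L z w (P b) (P a)" using inv by simp
  also have "\<dots> = - L z w b a" using a b ml by simp
  finally show ba: "L z w b a = 0" by simp
  show "L a b z w = 0" "L b a z w = 0"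
    using ab ba curvature_like_pair_symmetry[OF C] by metis+
qed

text \<open>By the Bianchi identity, the components pairing two (+1)-eigenvectors with two
  (-1)-eigenvectors vanish as well.\<close>

lemma P_tensor_plus_minus:
  assumes R: "riemannian_P_tensor P L" and "P x = x" "P y = y" "P z = - z" "P w = - w"
  shows "L x y z w = 0" "L z w x y = 0"
proof -
  have C: "curvature_like L" using R unfolding riemannian_P_tensor_def by blast
  have "L x y z w + L y z x w + L z x y w = 0"
    using C unfolding curvature_like_def by blast
  moreover have "L y z x w = 0" "L z x y w = 0" using P_tensor_mixed_pair[OF R] assms by auto
  ultimately show "L x y z w = 0" by simp
  then show "L z w x y = 0" using curvature_like_pair_symmetry[OF C] by metis
qed

lemma P_tensor_split:
  assumes R: "riemannian_P_tensor P L"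
    and "P xp = xp" "P xm = - xm" "P yp = yp" "P ym = - ym"
    and "P zp = zp" "P zm = - zm" "P wp = wp" "P wm = - wm"
  shows "L (xp+xm) (yp+ym) (zp+zm) (wp+wm) = L xp yp zp wp + L xm ym zm wm"
proof -
  have C: "curvature_like L" using R unfolding riemannian_P_tensor_def by blast
  have "L xm ym zp wp = 0" "L xp yp zm wm = 0"
    using P_tensor_plus_minus[OF R] assms by auto
  then show ?thesis
    using assms
    by (simp add: multilinear4_simps[OF curvature_like_multilinear[OF C]]
        P_tensor_mixed_pair[OF R])
qed

section \<open>Orthonormal bases and traces\<close>

definition orthonormal_basis :: "'a::euclidean_space set \<Rightarrow> bool" where
  "orthonormal_basis U \<longleftrightarrow> pairwise orthogonal U \<and> (\<forall>u\<in>U. norm u = 1) \<and> span U = UNIV"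

text \<open>Fourier expansion in an orthonormal basis, from the Gram--Schmidt step: the remainder is
  orthogonal to the whole space, hence zero.\<close>

lemma orthonormal_basis_expansion:
  assumes "orthonormal_basis U"
  shows "x = (\<Sum>u\<in>U. inner x u *\<^sub>R u)"
proof -
  have orth: "pairwise orthogonal U" and unit: "\<And>u. u \<in> U \<Longrightarrow> inner u u = 1"
    and span: "span U = UNIV"
    using assms unfolding orthonormal_basis_def by (auto simp: dot_square_norm)
  define r where "r = x - (\<Sum>u\<in>U. (inner u x / inner u u) *\<^sub>R u)"
  have "orthogonal r r"
    using Gram_Schmidt_step[OF orth, of r x] span unfolding r_def by simp
  then have "r = 0" by (simp add: orthogonal_self)
  then show ?thesis
    unfolding r_def using unit by (simp add: inner_commute cong: sum.cong)
qed

text \<open>The trace of a bilinear form does not depend on the orthonormal basis used to compute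
  it; we only need that vectors expand in the second basis.\<close>

lemma trace_basis_change:
  fixes B :: "'a::euclidean_space \<Rightarrow> 'a \<Rightarrow> real"
  assumes expand: "\<And>x. x = (\<Sum>u\<in>U. inner x u *\<^sub>R u)"
    and lin1: "\<And>w. linear (\<lambda>v. B v w)" and lin2: "\<And>v. linear (\<lambda>w. B v w)"
  shows "(\<Sum>b\<in>Basis. B b b) = (\<Sum>u\<in>U. B u u)"
proof -
  have "B b b = (\<Sum>u\<in>U. inner b u * B u b)" for b
  proof -
    have "B b b = B (\<Sum>u\<in>U. inner b u *\<^sub>R u) b" using expand[of b] by simp
    also have "\<dots> = (\<Sum>u\<in>U. inner b u * B u b)"
      using linear_sum[OF lin1[of b], of "\<lambda>u. inner b u *\<^sub>R u" U] linear_scale[OF lin1[of b]]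
      by simp
    finally show ?thesis .
  qed
  then have "(\<Sum>b\<in>Basis. B b b) = (\<Sum>u\<in>U. \<Sum>b\<in>Basis. inner b u * B u b)"
    by (simp add: sum.swap[of _ Basis])
  also have "\<dots> = (\<Sum>u\<in>U. B u (\<Sum>b\<in>Basis. inner u b *\<^sub>R b))"
  proof (rule sum.cong[OF refl])
    fix u
    show "(\<Sum>b\<in>Basis. inner b u * B u b) = B u (\<Sum>b\<in>Basis. inner u b *\<^sub>R b)"
      using linear_sum[OF lin2[of u], of "\<lambda>b. inner u b *\<^sub>R b" Basis] linear_scale[OF lin2[of u]]
      by (simp add: inner_commute)
  qed
  also have "\<dots> = (\<Sum>u\<in>U. B u u)" by (simp add: euclidean_representation)
  finally show ?thesis .
qed

section \<open>The eigenspace decomposition of an almost product structure\<close>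

text \<open>Orthonormal bases of the two eigenspaces together form an orthonormal basis of the
  whole space (the eigenspaces are orthogonal and x = (x + Px)/2 + (x - Px)/2).\<close>

lemma eigenspace_bases:
  fixes P :: "'a::euclidean_space \<Rightarrow> 'a"
  assumes AP: "almost_product_structure P"
  obtains Bp Bm where "\<And>u. u \<in> Bp \<Longrightarrow> P u = u" "\<And>u. u \<in> Bm \<Longrightarrow> P u = - u"
    "Bp \<inter> Bm = {}" "orthonormal_basis (Bp \<union> Bm)"
proof -
  note Plin = almost_product_linear[OF AP]
  define Vp where "Vp = {x. P x = x}"
  define Vm where "Vm = {x. P x = - x}"
  have "subspace Vp" "subspace Vm" unfolding subspace_def Vp_def Vm_def by (simp_all add: Plin)
  then obtain Bp Bm where
    Bp: "Bp \<subseteq> Vp" "pairwise orthogonal Bp" "\<And>x. x \<in> Bp \<Longrightarrow> norm x = 1" "span Bp = Vp" and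
    Bm: "Bm \<subseteq> Vm" "pairwise orthogonal Bm" "\<And>x. x \<in> Bm \<Longrightarrow> norm x = 1" "span Bm = Vm"
    using orthonormal_basis_subspace by metis
  have cross: "inner u v = 0" if "u \<in> Bp" "v \<in> Bm" for u v
  proof -
    have "P u = u" "P v = - v" using that Bp(1) Bm(1) unfolding Vp_def Vm_def by auto
    then have "inner u v = - inner u v" using almost_product_selfadjoint[OF AP, of u v] by simp
    then show ?thesis by simp
  qed
  have disjoint: "Bp \<inter> Bm = {}"
    using cross Bp(3) by fastforce
  have "pairwise orthogonal (Bp \<union> Bm)"
    using Bp(2) Bm(2) cross unfolding pairwise_def orthogonal_def by (auto, metis inner_commute)
  moreover have "span (Bp \<union> Bm) = UNIV"
  proof -
    have "x \<in> span (Bp \<union> Bm)" for x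
    proof -
      have "(1/2) *\<^sub>R (x + P x) \<in> Vp" "(1/2) *\<^sub>R (x - P x) \<in> Vm"
        unfolding Vp_def Vm_def by (simp_all add: Plin almost_product_involutive[OF AP] algebra_simps)
      then have "(1/2) *\<^sub>R (x + P x) \<in> span (Bp \<union> Bm)" "(1/2) *\<^sub>R (x - P x) \<in> span (Bp \<union> Bm)"
        using Bp(4) Bm(4) span_mono[of Bp "Bp \<union> Bm"] span_mono[of Bm "Bp \<union> Bm"] by auto
      then have "(1/2) *\<^sub>R (x + P x) + (1/2) *\<^sub>R (x - P x) \<in> span (Bp \<union> Bm)"
        by (rule span_add)
      then show ?thesis by (simp add: algebra_simps flip: scaleR_add_left)
    qed
    then show ?thesis by blast
  qed
  ultimately have "orthonormal_basis (Bp \<union> Bm)"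
    unfolding orthonormal_basis_def using Bp(3) Bm(3) by blast
  then show ?thesis using that Bp(1) Bm(1) disjoint unfolding Vp_def Vm_def by blast
qed

lemma ptrace_eigenspace_bases:
  assumes AP: "almost_product_structure P"
    and Bp: "\<And>u. u \<in> Bp \<Longrightarrow> P u = u" and Bm: "\<And>u. u \<in> Bm \<Longrightarrow> P u = - u"
    and disjoint: "Bp \<inter> Bm = {}" and ONB: "orthonormal_basis (Bp \<union> Bm)"
  shows "ptrace P = real (card Bp) - real (card Bm)"
proof -
  have fin: "finite Bp" "finite Bm"
    using ONB pairwise_orthogonal_imp_finite unfolding orthonormal_basis_def by blast+
  have unit: "inner u u = 1" if "u \<in> Bp \<union> Bm" for u
    using ONB that unfolding orthonormal_basis_def by (simp add: dot_square_norm)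
  have "ptrace P = (\<Sum>u\<in>Bp \<union> Bm. inner (P u) u)"
    unfolding ptrace_def
    by (rule trace_basis_change[OF orthonormal_basis_expansion[OF ONB]])
      (auto intro!: linearI simp: almost_product_linear[OF AP] inner_add_left inner_add_right)
  also have "\<dots> = (\<Sum>u\<in>Bp. inner (P u) u) + (\<Sum>u\<in>Bm. inner (P u) u)"
    using fin disjoint by (simp add: sum.union_disjoint)
  also have "\<dots> = (\<Sum>u\<in>Bp. 1) + (\<Sum>u\<in>Bm. -1)"
    using Bp Bm unit by (intro arg_cong2[where f="(+)"] sum.cong) auto
  finally show ?thesis by simp
qed

section \<open>Adapted frames in dimension four\<close>

locale adapted_frame =
  fixes P :: "'a::euclidean_space \<Rightarrow> 'a" and u1 u2 u3 u4 :: 'a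
  assumes almost_product: "almost_product_structure P"
    and eigen: "P u1 = u1" "P u2 = u2" "P u3 = - u3" "P u4 = - u4"
    and unit: "inner u1 u1 = 1" "inner u2 u2 = 1" "inner u3 u3 = 1" "inner u4 u4 = 1"
    and orth: "inner u1 u2 = 0" "inner u1 u3 = 0" "inner u1 u4 = 0"
      "inner u2 u3 = 0" "inner u2 u4 = 0" "inner u3 u4 = 0"
    and expansion: "\<And>x. x = inner x u1 *\<^sub>R u1 + inner x u2 *\<^sub>R u2 + inner x u3 *\<^sub>R u3
                          + inner x u4 *\<^sub>R u4"

lemma adapted_frame_exists:
  fixes P :: "'a::euclidean_space \<Rightarrow> 'a"
  assumes dim: "DIM('a) = 4" and AP: "almost_product_structure P" and tr: "ptrace P = 0"
  obtains u1 u2 u3 u4 where "adapted_frame P u1 u2 u3 u4"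
proof -
  obtain Bp Bm where Bp: "\<And>u. u \<in> Bp \<Longrightarrow> P u = u" and Bm: "\<And>u. u \<in> Bm \<Longrightarrow> P u = - u"
    and disjoint: "Bp \<inter> Bm = {}" and ONB: "orthonormal_basis (Bp \<union> Bm)"
    using eigenspace_bases[OF AP] by metis
  have orth: "pairwise orthogonal (Bp \<union> Bm)" and unit: "\<And>u. u \<in> Bp \<union> Bm \<Longrightarrow> norm u = 1"
    using ONB unfolding orthonormal_basis_def by blast+
  have fin: "finite Bp" "finite Bm" using pairwise_orthogonal_imp_finite[OF orth] by auto
  have "independent (Bp \<union> Bm)"
    using pairwise_orthogonal_independent[OF orth] unit by force
  then have "card (Bp \<union> Bm) = 4"
    using basis_card_eq_dim[of "Bp \<union> Bm" UNIV] ONB dim unfolding orthonormal_basis_def by simp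
  then have "card Bp + card Bm = 4" using card_Un_disjoint[OF fin disjoint] by simp
  moreover have "real (card Bp) - real (card Bm) = 0"
    using ptrace_eigenspace_bases[OF AP Bp Bm disjoint ONB] tr by simp
  ultimately have "card Bp = 2" "card Bm = 2" by linarith+
  then obtain u1 u2 u3 u4 where Bp2: "Bp = {u1, u2}" "u1 \<noteq> u2" and Bm2: "Bm = {u3, u4}" "u3 \<noteq> u4"
    by (meson card_2_iff)
  have distinct: "u1 \<noteq> u3" "u1 \<noteq> u4" "u2 \<noteq> u3" "u2 \<noteq> u4" using disjoint Bp2 Bm2 by auto
  have "inner u v = 0" if "u \<in> Bp \<union> Bm" "v \<in> Bp \<union> Bm" "u \<noteq> v" for u v
    using orth that unfolding pairwise_def orthogonal_def by blast
  moreover have "inner u u = 1" if "u \<in> Bp \<union> Bm" for u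
    using unit[OF that] by (simp add: dot_square_norm)
  moreover have "x = inner x u1 *\<^sub>R u1 + inner x u2 *\<^sub>R u2 + inner x u3 *\<^sub>R u3 + inner x u4 *\<^sub>R u4"
    for x
  proof -
    have "Bp \<union> Bm = {u1, u2, u3, u4}" using Bp2 Bm2 by auto
    then show ?thesis
      using orthonormal_basis_expansion[OF ONB, of x] Bp2 Bm2 distinct by (simp add: add.assoc)
  qed
  ultimately have "adapted_frame P u1 u2 u3 u4"
    using AP Bp Bm Bp2 Bm2 distinct by unfold_locales auto
  then show ?thesis by (rule that)
qed

context adapted_frame
begin

lemma orth_sym: "inner u2 u1 = 0" "inner u3 u1 = 0" "inner u4 u1 = 0"
    "inner u3 u2 = 0" "inner u4 u2 = 0" "inner u4 u3 = 0"
  using orth by (simp_all add: inner_commute)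

lemma distinct: "u1 \<noteq> u2" "u1 \<noteq> u3" "u1 \<noteq> u4" "u2 \<noteq> u3" "u2 \<noteq> u4" "u3 \<noteq> u4"
  using unit orth by auto

lemma inner_coords:
  "inner x y = inner x u1 * inner y u1 + inner x u2 * inner y u2
             + inner x u3 * inner y u3 + inner x u4 * inner y u4"
proof -
  have "inner x y = inner (inner x u1 *\<^sub>R u1 + inner x u2 *\<^sub>R u2 + inner x u3 *\<^sub>R u3
                           + inner x u4 *\<^sub>R u4) y"
    using expansion[of x] by simp
  also have "\<dots> = inner x u1 * inner u1 y + inner x u2 * inner u2 y
                  + inner x u3 * inner u3 y + inner x u4 * inner u4 y"
    by (simp only: inner_add_left inner_scaleR_left)
  finally show ?thesis by (simp add: inner_commute[of _ y])
qed

lemma P_coords: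
  "inner (P x) u1 = inner x u1" "inner (P x) u2 = inner x u2"
  "inner (P x) u3 = - inner x u3" "inner (P x) u4 = - inner x u4"
  using almost_product_selfadjoint[OF almost_product, of x] eigen by simp_all

lemma gtilde_coords:
  "inner x (P y) = inner x u1 * inner y u1 + inner x u2 * inner y u2
                 - inner x u3 * inner y u3 - inner x u4 * inner y u4"
  using inner_coords[of x "P y"] by (simp add: P_coords)

lemma trace_in_frame:
  fixes B :: "'a \<Rightarrow> 'a \<Rightarrow> real"
  assumes "\<And>w. linear (\<lambda>v. B v w)" "\<And>v. linear (\<lambda>w. B v w)"
  shows "(\<Sum>b\<in>Basis. B b b) = B u1 u1 + B u2 u2 + B u3 u3 + B u4 u4"
proof -
  have "x = (\<Sum>u\<in>{u1,u2,u3,u4}. inner x u *\<^sub>R u)" for x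
    using expansion[of x] distinct by (simp add: add.assoc)
  from trace_basis_change[OF this assms] show ?thesis
    using distinct by (simp add: add.assoc)
qed

definition area_plus :: "'a \<Rightarrow> 'a \<Rightarrow> real" where
  "area_plus x y = inner x u1 * inner y u2 - inner x u2 * inner y u1"

definition area_minus :: "'a \<Rightarrow> 'a \<Rightarrow> real" where
  "area_minus x y = inner x u3 * inner y u4 - inner x u4 * inner y u3"

end

locale P_tensor_frame = adapted_frame P u1 u2 u3 u4
  for P :: "'a::euclidean_space \<Rightarrow> 'a" and u1 u2 u3 u4 +
  fixes L :: "'a \<Rightarrow> 'a \<Rightarrow> 'a \<Rightarrow> 'a \<Rightarrow> real"
  assumes P_tensor: "riemannian_P_tensor P L"
begin

lemma multilinear: "multilinear4 L"
  using P_tensor curvature_like_multilinear unfolding riemannian_P_tensor_def by blast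

definition k_plus :: real where "k_plus = L u1 u2 u2 u1"
definition k_minus :: real where "k_minus = L u3 u4 u4 u3"

lemma normal_form:
  "L x y z w = k_plus * area_plus x y * area_plus w z + k_minus * area_minus x y * area_minus w z"
proof -
  have C: "curvature_like L" using P_tensor unfolding riemannian_P_tensor_def by blast
  define pr where "pr v = inner v u1 *\<^sub>R u1 + inner v u2 *\<^sub>R u2" for v
  define mr where "mr v = inner v u3 *\<^sub>R u3 + inner v u4 *\<^sub>R u4" for v
  have decompose: "pr v + mr v = v" for v using expansion[of v] unfolding pr_def mr_def by (simp add: add.assoc)
  have eig: "P (pr v) = pr v" "P (mr v) = - mr v" for v
    unfolding pr_def mr_def by (simp_all add: almost_product_linear[OF almost_product] eigen)
  have "L x y z w = L (pr x + mr x) (pr y + mr y) (pr z + mr z) (pr w + mr w)"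
    by (simp only: decompose)
  also have "\<dots> = L (pr x) (pr y) (pr z) (pr w) + L (mr x) (mr y) (mr z) (mr w)"
    by (rule P_tensor_split[OF P_tensor]) (simp_all add: eig)
  also have "\<dots> = k_plus * area_plus x y * area_plus w z + k_minus * area_minus x y * area_minus w z"
    unfolding pr_def mr_def curvature_like_on_plane[OF C] k_plus_def k_minus_def
      area_plus_def area_minus_def by (simp add: algebra_simps)
  finally show ?thesis .
qed

lemma ricci_coords:
  "ricci L y z = k_plus * (inner y u1 * inner z u1 + inner y u2 * inner z u2)
               + k_minus * (inner y u3 * inner z u3 + inner y u4 * inner z u4)"
proof -
  have "ricci L y z = L u1 y z u1 + L u2 y z u2 + L u3 y z u3 + L u4 y z u4"
    unfolding ricci_def using multilinear unfolding multilinear4_def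
    by (intro trace_in_frame) blast+
  then show ?thesis
    by (simp add: normal_form area_plus_def area_minus_def unit orth orth_sym algebra_simps)
qed

lemma ricci_star_coords:
  "ricci_star P L y z = k_plus * (inner y u1 * inner z u1 + inner y u2 * inner z u2)
                      - k_minus * (inner y u3 * inner z u3 + inner y u4 * inner z u4)"
proof -
  have "ricci_star P L y z = L u1 y z (P u1) + L u2 y z (P u2) + L u3 y z (P u3) + L u4 y z (P u4)"
    unfolding ricci_star_def using multilinear unfolding multilinear4_def
    by (intro trace_in_frame linearI)
      (simp_all add: almost_product_linear[OF almost_product] multilinear4_simps[OF multilinear])
  then show ?thesis
    by (simp add: eigen multilinear4_simps[OF multilinear] normal_form area_plus_def
        area_minus_def unit orth orth_sym algebra_simps)
qed

lemma scal_value: "scal L = 2 * k_plus + 2 * k_minus"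
proof -
  have "scal L = ricci L u1 u1 + ricci L u2 u2 + ricci L u3 u3 + ricci L u4 u4"
    unfolding scal_def
    by (intro trace_in_frame linearI) (simp_all add: ricci_coords algebra_simps)
  then show ?thesis by (simp add: ricci_coords unit orth orth_sym)
qed

lemma scal_star_value: "scal_star P L = 2 * k_plus - 2 * k_minus"
proof -
  have "scal_star P L = ricci_star P L u1 u1 + ricci_star P L u2 u2
                      + ricci_star P L u3 u3 + ricci_star P L u4 u4"
    unfolding scal_star_def
    by (intro trace_in_frame linearI) (simp_all add: ricci_star_coords algebra_simps)
  then show ?thesis by (simp add: ricci_star_coords unit orth orth_sym)
qed

lemma almost_Einstein:
  "ricci L y z = (1/4) * (scal L * inner y z + scal_star P L * gtilde P y z)"
  unfolding gtilde_def scal_value scal_star_value ricci_coords inner_coords[of y z] gtilde_coords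
  by (simp add: algebra_simps)

text \<open>Claim (2): on a totally real orthonormal pair, x and y split half-and-half between the
  eigenplanes, so each squared area form equals 1/4 (Lagrange's identity).\<close>

lemma totally_real_sectional:
  assumes "norm x = 1" "norm y = 1" "inner x y = 0"
    and "inner x (P x) = 0" "inner x (P y) = 0" "inner y (P y) = 0"
  shows "L x y y x = scal L / 8"
proof -
  define x1 x2 x3 x4 where xc: "x1 = inner x u1" "x2 = inner x u2" "x3 = inner x u3" "x4 = inner x u4"
  define y1 y2 y3 y4 where yc: "y1 = inner y u1" "y2 = inner y u2" "y3 = inner y u3" "y4 = inner y u4"
  have "inner x x = 1" "inner y y = 1" using assms(1,2) by (simp_all add: dot_square_norm)
  then have g: "x1*x1+x2*x2+x3*x3+x4*x4 = 1" "y1*y1+y2*y2+y3*y3+y4*y4 = 1"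
    "x1*y1+x2*y2+x3*y3+x4*y4 = 0"
    using inner_coords[of x x] inner_coords[of y y] inner_coords[of x y] assms(3)
    unfolding xc yc by simp_all
  have gt: "x1*x1+x2*x2-x3*x3-x4*x4 = 0" "y1*y1+y2*y2-y3*y3-y4*y4 = 0"
    "x1*y1+x2*y2-x3*y3-x4*y4 = 0"
    using gtilde_coords[of x x] gtilde_coords[of y y] gtilde_coords[of x y] assms(4-6)
    unfolding xc yc by simp_all
  have lagrange: "(x1*y2-x2*y1)^2 = (x1*x1+x2*x2)*(y1*y1+y2*y2) - (x1*y1+x2*y2)^2"
    "(x3*y4-x4*y3)^2 = (x3*x3+x4*x4)*(y3*y3+y4*y4) - (x3*y3+x4*y4)^2"
    by algebra+
  have halves: "x1*x1+x2*x2 = 1/2" "x3*x3+x4*x4 = 1/2" "y1*y1+y2*y2 = 1/2" "y3*y3+y4*y4 = 1/2"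
    "x1*y1+x2*y2 = 0" "x3*y3+x4*y4 = 0"
    using g gt by linarith+
  have quarter: "(x1*y2-x2*y1)^2 = 1/4" "(x3*y4-x4*y3)^2 = 1/4"
    unfolding lagrange halves by simp_all
  have areas: "area_plus x y = x1*y2-x2*y1" "area_minus x y = x3*y4-x4*y3"
    unfolding area_plus_def area_minus_def xc yc by simp_all
  have "L x y y x = k_plus * (area_plus x y)^2 + k_minus * (area_minus x y)^2"
    by (simp add: normal_form power2_eq_square)
  also have "\<dots> = (k_plus + k_minus) / 4"
    unfolding areas quarter by simp
  finally show ?thesis by (simp add: scal_value)
qed

text \<open>Claim (3): the area forms vanish on (x, Px), since P preserves both eigenplanes.\<close>

lemma invariant_sectional: "L x (P x) (P x) x = 0"
proof -
  have "area_plus x (P x) = 0" "area_minus x (P x) = 0"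
    unfolding area_plus_def area_minus_def P_coords by simp_all
  then show ?thesis by (simp add: normal_form)
qed

end

theorem proposition3p3:
  fixes P :: "'a::euclidean_space \<Rightarrow> 'a"
    and L :: "'a \<Rightarrow> 'a \<Rightarrow> 'a \<Rightarrow> 'a \<Rightarrow> real"
  assumes "DIM('a) = 4"
    and "almost_product_structure P"
    and "ptrace P = 0"
    and "riemannian_P_tensor P L"
  shows "(\<forall>y z. ricci L y z = (1/4) * (scal L * inner y z + scal_star P L * gtilde P y z))
       \<and> (\<forall>x y. norm x = 1 \<and> norm y = 1 \<and> inner x y = 0 \<and>
              inner x (P x) = 0 \<and> inner x (P y) = 0 \<and> inner y (P x) = 0 \<and> inner y (P y) = 0
              \<longrightarrow> L x y y x = scal L / 8)
       \<and> (\<forall>x. norm x = 1 \<and> inner x (P x) = 0 \<longrightarrow> L x (P x) (P x) x = 0)"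
proof -
  obtain u1 u2 u3 u4 where "adapted_frame P u1 u2 u3 u4"
    using adapted_frame_exists assms(1-3) by blast
  then interpret P_tensor_frame P u1 u2 u3 u4 L
    using assms(4) by (simp add: P_tensor_frame_def P_tensor_frame_axioms_def)
  show ?thesis
    using almost_Einstein totally_real_sectional invariant_sectional by blast
qed

end
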